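(* Let $X=\{x_1,\dots,x_n\}$, $S=K[X]$, and let $x\in X$. Let $I_1\subset S$ be a monomial ideal with linear quotients and let $I_2\subset S$ be a monomial ideal with linear quotients whose minimal generators lie in $K[X\setminus\{x\}]$, such that $I_2\subseteq I_1$. Let $I=xI_1+I_2$ and suppose $\mathcal{G}(xI_1)\subseteq\mathcal{G}(I)$. Then $I$ has linear quotients.
   Context: For a monomial ideal $I$, $\mathcal{G}(I)$ is its minimal monomial generating set. A monomial ideal $I$ has linear quotients if $\mathcal{G}(I)$ can be ordered $u_1,\dots,u_s$ such that for each $i=2,\dots,s$ the colon ideal $(u_1,\dots,u_{i-1}):(u_i)$ is generated by variables. *)

theory Defs
  imports Main
begin

text \<open>Monomials in the variables 'v (a finite type, the variable set X) are exponent
vectors 'v \<Rightarrow> nat; multiplication is addition, divisibility is the pointwise order.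
A monomial ideal of S = K[X] is identified with the set of monomials it contains
(an upward closed set under divisibility).\<close>

type_synonym 'v monomial = "'v \<Rightarrow> nat"

definition mdvd :: "'v monomial \<Rightarrow> 'v monomial \<Rightarrow> bool" where
  "mdvd u w \<longleftrightarrow> (\<forall>v. u v \<le> w v)"

definition mmult :: "'v monomial \<Rightarrow> 'v monomial \<Rightarrow> 'v monomial" where
  "mmult u w = (\<lambda>v. u v + w v)"

definition var :: "'v \<Rightarrow> 'v monomial" where
  "var x = (\<lambda>v. if v = x then 1 else 0)"

definition monomial_ideal :: "'v monomial set \<Rightarrow> bool" where
  "monomial_ideal I \<longleftrightarrow> (\<forall>u\<in>I. \<forall>w. mdvd u w \<longrightarrow> w \<in> I)"

definition gen_ideal :: "'v monomial set \<Rightarrow> 'v monomial set" where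
  "gen_ideal G = {w. \<exists>g\<in>G. mdvd g w}"

definition mingens :: "'v monomial set \<Rightarrow> 'v monomial set" where
  "mingens I = {u\<in>I. \<forall>w\<in>I. mdvd w u \<longrightarrow> w = u}"

definition colon :: "'v monomial set \<Rightarrow> 'v monomial \<Rightarrow> 'v monomial set" where
  "colon J u = {w. mmult w u \<in> J}"

definition mult_ideal :: "'v monomial \<Rightarrow> 'v monomial set \<Rightarrow> 'v monomial set" where
  "mult_ideal u I = mmult u ` I"

definition generated_by_variables :: "'v monomial set \<Rightarrow> bool" where
  "generated_by_variables J \<longleftrightarrow> (\<exists>V. J = gen_ideal (var ` V))"

definition linear_quotients :: "'v monomial set \<Rightarrow> bool" where
  "linear_quotients I \<longleftrightarrow>
     (\<exists>us. distinct us \<and> set us = mingens I \<and>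
        (\<forall>i. 1 \<le> i \<and> i < length us \<longrightarrow>
              generated_by_variables (colon (gen_ideal (set (take i us))) (us ! i))))"

end

theory Submission
  imports Defs
begin

text \<open>Since \<open>\<G>(I) = x \<G>(I\<^sub>1) \<union> \<G>(I\<^sub>2)\<close>, list \<open>\<G>(I)\<close> as \<open>x\<close> times an admissible order of
\<open>\<G>(I\<^sub>1)\<close>, followed by an admissible order of \<open>\<G>(I\<^sub>2)\<close>. Multiplying by \<open>x\<close> does not change
colon ideals, so the first block keeps linear quotients. For a generator \<open>v\<close> of \<open>I\<^sub>2\<close>,
the colon ideal splits as \<open>(x \<G>(I\<^sub>1)) : v\<close> plus the colon ideal inside \<open>I\<^sub>2\<close>; since
\<open>v \<in> I\<^sub>1\<close> is divisible by some generator of \<open>I\<^sub>1\<close> and \<open>x\<close> does not divide \<open>v\<close>, the first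
part is exactly \<open>(x)\<close>.\<close>

definition linear_quotient_order :: "'v monomial list \<Rightarrow> bool" where
  "linear_quotient_order us \<longleftrightarrow>
     (\<forall>i. 1 \<le> i \<and> i < length us \<longrightarrow>
        generated_by_variables (colon (gen_ideal (set (take i us))) (us ! i)))"

lemma linear_quotients_iff_order:
  "linear_quotients I \<longleftrightarrow>
     (\<exists>us. distinct us \<and> set us = mingens I \<and> linear_quotient_order us)"
  unfolding linear_quotients_def linear_quotient_order_def ..

lemma mdvd_refl [simp]: "mdvd u u"
  unfolding mdvd_def by simp

lemma mdvd_trans: "mdvd a b \<Longrightarrow> mdvd b c \<Longrightarrow> mdvd a c"
  unfolding mdvd_def using le_trans by blast

lemma mmult_left_cancel [simp]: "mmult c a = mmult c b \<longleftrightarrow> a = b"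
  unfolding mmult_def by (auto simp: fun_eq_iff)

lemma inj_mmult: "inj (mmult c)"
  by (simp add: inj_def)

lemma mdvd_mmult_cancel [simp]: "mdvd (mmult c a) (mmult c b) \<longleftrightarrow> mdvd a b"
  unfolding mmult_def mdvd_def by auto

lemma not_mdvd_mmult_var: "g x = 0 \<Longrightarrow> \<not> mdvd (mmult (var x) u) g"
  unfolding mdvd_def mmult_def var_def by (auto dest: spec[of _ x])

lemma ex_mingens_mdvd:
  fixes I :: "('v::finite) monomial set"
  shows "u \<in> I \<Longrightarrow> \<exists>g\<in>mingens I. mdvd g u"
proof (induction "\<Sum>v\<in>UNIV. u v" arbitrary: u rule: less_induct)
  case less
  show ?case
  proof (cases "u \<in> mingens I")
    case True
    then show ?thesis using mdvd_refl by blast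
  next
    case False
    then obtain w where w: "w \<in> I" "mdvd w u" "w \<noteq> u"
      using less.prems unfolding mingens_def by auto
    then obtain v where v: "w v \<noteq> u v" by (auto simp: fun_eq_iff)
    have "(\<Sum>v\<in>UNIV. w v) < (\<Sum>v\<in>UNIV. u v)"
      using w v by (intro sum_strict_mono_ex1) (auto simp: mdvd_def intro!: le_neq_trans)
    then obtain g where "g \<in> mingens I" "mdvd g w" using less.hyps w(1) by blast
    then show ?thesis using w(2) mdvd_trans by blast
  qed
qed

lemma mingens_mult_ideal: "mingens (mult_ideal c I) = mmult c ` mingens I"
  unfolding mingens_def mult_ideal_def by auto

lemma mingens_Un_subset: "mingens (A \<union> B) \<subseteq> mingens A \<union> mingens B"
  unfolding mingens_def by auto

lemma mingens_in_mingens_Un: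
  assumes "g \<in> mingens B" and "\<forall>a\<in>A. \<not> mdvd a g"
  shows "g \<in> mingens (A \<union> B)"
  using assms unfolding mingens_def by auto

lemma gen_ideal_Un: "gen_ideal (A \<union> B) = gen_ideal A \<union> gen_ideal B"
  unfolding gen_ideal_def by auto

lemma colon_Un: "colon (A \<union> B) u = colon A u \<union> colon B u"
  unfolding colon_def by auto

lemma generated_by_variables_empty: "generated_by_variables {}"
  unfolding generated_by_variables_def gen_ideal_def by (intro exI[of _ "{}"]) simp

lemma generated_by_variables_Un:
  "generated_by_variables A \<Longrightarrow> generated_by_variables B \<Longrightarrow> generated_by_variables (A \<union> B)"
  unfolding generated_by_variables_def by (metis gen_ideal_Un image_Un)

lemma colon_gen_ideal_mmult:
  "colon (gen_ideal (mmult c ` A)) (mmult c u) = colon (gen_ideal A) u"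
proof -
  have "(\<forall>v. c v + g v \<le> w v + (c v + u v)) \<longleftrightarrow> (\<forall>v. g v \<le> w v + u v)" for g w
    by (simp add: add.left_commute)
  then show ?thesis
    unfolding colon_def gen_ideal_def mdvd_def mmult_def by auto
qed

lemma colon_gen_ideal_mult_var:
  assumes "g \<in> A" "mdvd g v" "v x = 0"
  shows "colon (gen_ideal (mmult (var x) ` A)) v = gen_ideal (var ` {x})"
proof (intro set_eqI iffI)
  fix w assume "w \<in> colon (gen_ideal (mmult (var x) ` A)) v"
  then obtain h where "\<forall>y. var x y + h y \<le> w y + v y"
    unfolding colon_def gen_ideal_def mdvd_def mmult_def by auto
  then have "1 \<le> w x" using assms(3) by (auto simp: var_def dest: spec[of _ x])
  then show "w \<in> gen_ideal (var ` {x})"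
    unfolding gen_ideal_def mdvd_def var_def by auto
next
  fix w assume "w \<in> gen_ideal (var ` {x})"
  then have "1 \<le> w x"
    unfolding gen_ideal_def mdvd_def var_def by (auto dest: spec[of _ x])
  moreover have "g x = 0"
    using assms(2,3) unfolding mdvd_def by (metis le_zero_eq)
  ultimately have "mdvd (mmult (var x) g) (mmult w v)"
    using assms(2) unfolding mdvd_def mmult_def var_def by (auto intro: trans_le_add2)
  then show "w \<in> colon (gen_ideal (mmult (var x) ` A)) v"
    using assms(1) unfolding colon_def gen_ideal_def by auto
qed

lemma linear_quotient_order_map_mmult:
  "linear_quotient_order us \<Longrightarrow> linear_quotient_order (map (mmult c) us)"
  unfolding linear_quotient_order_def by (simp add: take_map colon_gen_ideal_mmult)

lemma linear_quotient_order_append: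
  assumes "linear_quotient_order us1" and "linear_quotient_order us2"
    and "\<forall>v\<in>set us2. generated_by_variables (colon (gen_ideal (set us1)) v)"
  shows "linear_quotient_order (us1 @ us2)"
  unfolding linear_quotient_order_def
proof (intro allI impI)
  fix i assume i: "1 \<le> i \<and> i < length (us1 @ us2)"
  show "generated_by_variables (colon (gen_ideal (set (take i (us1 @ us2)))) ((us1 @ us2) ! i))"
  proof (cases "i < length us1")
    case True
    then show ?thesis using assms(1) i by (simp add: linear_quotient_order_def nth_append)
  next
    case False
    define j where "j = i - length us1"
    have j: "j < length us2" using i False unfolding j_def by auto
    have "colon (gen_ideal (set (take i (us1 @ us2)))) ((us1 @ us2) ! i)
        = colon (gen_ideal (set us1)) (us2 ! j) \<union> colon (gen_ideal (set (take j us2))) (us2 ! j)"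
      using False by (simp add: j_def nth_append gen_ideal_Un colon_Un)
    moreover have "generated_by_variables (colon (gen_ideal (set (take j us2))) (us2 ! j))"
      using assms(2) j unfolding linear_quotient_order_def
      by (cases "j = 0") (auto simp: gen_ideal_def colon_def generated_by_variables_empty)
    ultimately show ?thesis
      using assms(3) j by (simp add: generated_by_variables_Un)
  qed
qed

theorem lemma3p2:
  fixes I1 I2 :: "('v::finite) monomial set" and x :: 'v
  assumes "monomial_ideal I1" and "linear_quotients I1"
    and "monomial_ideal I2" and "linear_quotients I2"
    and "\<forall>g\<in>mingens I2. g x = 0"
    and "I2 \<subseteq> I1"
    and "mingens (mult_ideal (var x) I1) \<subseteq> mingens (mult_ideal (var x) I1 \<union> I2)"
  shows "linear_quotients (mult_ideal (var x) I1 \<union> I2)"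
proof -
  \<comment> \<open>\<open>mingens\<close> is taken of the given sets.\<close>
  let ?f = "mmult (var x)"
  obtain us1 where us1: "distinct us1" "set us1 = mingens I1" "linear_quotient_order us1"
    using assms(2) unfolding linear_quotients_iff_order by blast
  obtain us2 where us2: "distinct us2" "set us2 = mingens I2" "linear_quotient_order us2"
    using assms(4) unfolding linear_quotients_iff_order by blast
  have x_free: "\<not> mdvd (?f u) g" if "g \<in> mingens I2" for u g
    using assms(5) that by (simp add: not_mdvd_mmult_var)
  have "mingens I2 \<subseteq> mingens (mult_ideal (var x) I1 \<union> I2)"
    using x_free by (auto simp: mult_ideal_def intro: mingens_in_mingens_Un)
  then have gens: "set (map ?f us1 @ us2) = mingens (mult_ideal (var x) I1 \<union> I2)"
    using assms(7) mingens_Un_subset[of "mult_ideal (var x) I1" I2]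
    by (auto simp: us1(2) us2(2) mingens_mult_ideal)
  have "set (map ?f us1) \<inter> set us2 = {}"
    using x_free us2(2) by (auto intro: mdvd_refl)
  then have "distinct (map ?f us1 @ us2)"
    using us1(1) us2(1) by (simp add: distinct_map inj_on_subset[OF inj_mmult])
  moreover have "generated_by_variables (colon (gen_ideal (set (map ?f us1))) v)"
    if v: "v \<in> set us2" for v
  proof -
    obtain g where "g \<in> mingens I1" "mdvd g v"
      using v us2(2) assms(6) ex_mingens_mdvd[of v I1] unfolding mingens_def by auto
    then show ?thesis
      using v us1(2) us2(2) assms(5) colon_gen_ideal_mult_var[of g "set us1" v x]
      unfolding generated_by_variables_def by (auto intro!: exI[of _ "{x}"])
  qed
  ultimately show ?thesis
    using gens us1(3) us2(3) unfolding linear_quotients_iff_order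
    by (metis linear_quotient_order_append linear_quotient_order_map_mmult)
qed

end
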